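(* Let $A,B\in\mathcal{B}(\mathcal{H})$. Then for every $n\in\mathbb{N}$, \begin{equation*} w\left(\begin{bmatrix} 0 &A \\ B& 0 \end{bmatrix}\right)\geq \sqrt[2n]{\max\{w((AB)^n),w((BA)^n)\}}. \end{equation*}
   Context: $\mathcal{H}$ is a complex Hilbert space and $\mathcal{B}(\mathcal{H})$ is the $C^*$-algebra of all bounded linear operators on $\mathcal{H}$. For $T\in\mathcal{B}(\mathcal{H})$, $w(T)=\sup\{|\langle Tx,x\rangle|:\|x\|=1\}$ is the numerical radius. A $2\times 2$ operator matrix with entries in $\mathcal{B}(\mathcal{H})$ is regarded as an operator on $\mathcal{H}\oplus\mathcal{H}$. *)

theory Defs
  imports "HOL-Analysis.Analysis"
begin

text \<open>Complex Hilbert spaces (not available in the distribution libraries):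
  a real Banach space carrying a complex scalar multiplication compatible with the
  real one and a complex inner product (linear in the first argument) inducing the norm.\<close>

class complex_hilbert = banach +
  fixes scaleC :: "complex \<Rightarrow> 'a \<Rightarrow> 'a"
    and cinner :: "'a \<Rightarrow> 'a \<Rightarrow> complex"
  assumes scaleC_add_right: "scaleC a (x + y) = scaleC a x + scaleC a y"
    and scaleC_add_left: "scaleC (a + b) x = scaleC a x + scaleC b x"
    and scaleC_scaleC: "scaleC a (scaleC b x) = scaleC (a * b) x"
    and scaleC_one: "scaleC 1 x = x"
    and scaleR_scaleC: "scaleR r x = scaleC (complex_of_real r) x"
    and cinner_commute: "cinner x y = cnj (cinner y x)"
    and cinner_add_left: "cinner (x + y) z = cinner x z + cinner y z"
    and cinner_scaleC_left: "cinner (scaleC c x) y = c * cinner x y"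
    and cinner_self_real_nonneg: "Im (cinner x x) = 0 \<and> 0 \<le> Re (cinner x x)"
    and cinner_self_eq_zero: "cinner x x = 0 \<longleftrightarrow> x = 0"
    and norm_eq_sqrt_cinner: "norm x = sqrt (Re (cinner x x))"

definition bounded_op :: "('a::complex_hilbert \<Rightarrow> 'a) \<Rightarrow> bool" where
  "bounded_op T \<longleftrightarrow>
     (\<forall>x y. T (x + y) = T x + T y) \<and> (\<forall>c x. T (scaleC c x) = scaleC c (T x)) \<and>
     (\<exists>K. \<forall>x. norm (T x) \<le> K * norm x)"

text \<open>Numerical radius w(T) = sup { |<Tx,x>| : ||x|| = 1 }; 0 is inserted so that w = 0 on the zero space (all values are nonnegative, so otherwise the sup is unchanged).\<close>
definition numrad :: "('a::complex_hilbert \<Rightarrow> 'a) \<Rightarrow> real" where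
  "numrad T = Sup (insert 0 {cmod (cinner (T x) x) | x. norm x = 1})"

text \<open>Operators on H \<oplus> H, modelled as maps on pairs; the inner product on H \<oplus> H is
  <(x1,x2),(y1,y2)> = <x1,y1> + <x2,y2>, and the norm is sqrt(||x1||^2 + ||x2||^2).\<close>
definition cinner_sum :: "'a::complex_hilbert \<times> 'a \<Rightarrow> 'a \<times> 'a \<Rightarrow> complex" where
  "cinner_sum p q = cinner (fst p) (fst q) + cinner (snd p) (snd q)"

definition norm_sum :: "'a::complex_hilbert \<times> 'a \<Rightarrow> real" where
  "norm_sum p = sqrt ((norm (fst p))\<^sup>2 + (norm (snd p))\<^sup>2)"

definition numrad_sum :: "('a::complex_hilbert \<times> 'a \<Rightarrow> 'a \<times> 'a) \<Rightarrow> real" where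
  "numrad_sum M = Sup (insert 0 {cmod (cinner_sum (M p) p) | p. norm_sum p = 1})"

definition opmat :: "('a::complex_hilbert \<Rightarrow> 'a) \<Rightarrow> ('a \<Rightarrow> 'a) \<Rightarrow> ('a \<Rightarrow> 'a) \<Rightarrow> ('a \<Rightarrow> 'a)
    \<Rightarrow> 'a \<times> 'a \<Rightarrow> 'a \<times> 'a" where
  "opmat P Q R S = (\<lambda>(x, y). (P x + Q y, R x + S y))"

end

theory Submission
  imports Defs
begin

text \<open>The operator matrix T = [[0, A], [B, 0]] satisfies T^(2n) = [[(AB)^n, 0], [0, (BA)^n]],
  and compressing to one summand does not increase the numerical radius, so w((AB)^n) and
  w((BA)^n) are bounded by w(T^(2n)).  Berger's power inequality w(T^k) \<le> w(T)^k then bounds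
  both by w(T)^(2n).  The power inequality is proved following Pearcy: if w(S) \<le> 1 then
  y - \<zeta> S y has an inner product with y of nonnegative real part for every unimodular \<zeta>;
  for y_j = \<Sum>_{m<k} \<omega>^(jm) S^m x, with \<omega> a primitive k-th root of unity, the sum over j
  of \<langle>y_j - \<omega>^j S y_j, y_j\<rangle> telescopes to k \<langle>x - S^k x, x\<rangle>, whose real part is
  hence nonnegative.\<close>

notation scaleC (infixr "*\<^sub>C" 75)

section \<open>Complex inner products and direct sums\<close>

lemma cinner_zero_left [simp]: "cinner 0 y = 0"
  by (metis add_cancel_left_left cinner_add_left add_0)

lemma cinner_zero_right [simp]: "cinner x 0 = 0"
  by (metis cinner_commute cinner_zero_left complex_cnj_zero)

lemma cinner_add_right: "cinner x (y + z) = cinner x y + cinner x z"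
  by (metis cinner_commute cinner_add_left complex_cnj_add)

lemma cinner_scaleC_right: "cinner x (c *\<^sub>C y) = cnj c * cinner x y"
  by (metis cinner_commute cinner_scaleC_left complex_cnj_mult complex_cnj_cnj)

lemma cinner_diff_left: "cinner (x - y) z = cinner x z - cinner y z"
  by (metis cinner_add_left diff_add_cancel eq_diff_eq)

lemma cinner_diff_right: "cinner x (y - z) = cinner x y - cinner x z"
  by (metis cinner_add_right diff_add_cancel eq_diff_eq)

lemma cinner_sum_right: "cinner y (\<Sum>k\<in>K. f k) = (\<Sum>k\<in>K. cinner y (f k))"
  by (induction K rule: infinite_finite_induct) (auto simp: cinner_add_right)

lemma cinner_self_norm: "cinner x x = complex_of_real ((norm x)\<^sup>2)"
  using cinner_self_real_nonneg[of x] by (simp add: norm_eq_sqrt_cinner complex_eq_iff)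

lemma scaleC_zero_left [simp]: "0 *\<^sub>C x = 0"
  by (metis add_cancel_right_right scaleC_add_left add_0)

lemma scaleC_zero_right [simp]: "c *\<^sub>C 0 = 0"
  by (metis add_cancel_right_right scaleC_add_right add_0)

lemma scaleC_sum_left: "(\<Sum>k\<in>K. f k *\<^sub>C x) = (\<Sum>k\<in>K. f k) *\<^sub>C x"
  by (induction K rule: infinite_finite_induct) (auto simp: scaleC_add_left)

lemma scaleC_sum_right: "c *\<^sub>C (\<Sum>k\<in>K. f k) = (\<Sum>k\<in>K. c *\<^sub>C f k)"
  by (induction K rule: infinite_finite_induct) (auto simp: scaleC_add_right)

lemma cmod_cinner_le_norm:
  assumes "norm x = 1"
  shows "cmod (cinner u x) \<le> norm u"
proof -
  define c where "c = cinner u x"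
  have "cinner (u - c *\<^sub>C x) (u - c *\<^sub>C x)
      = cinner u u - cnj c * cinner u x - c * cinner x u + c * cnj c * cinner x x"
    by (simp add: cinner_diff_left cinner_diff_right cinner_scaleC_left cinner_scaleC_right
        algebra_simps)
  also have "\<dots> = cinner u u - c * cnj c"
    using assms by (simp add: cinner_self_norm c_def cinner_commute[of x u])
  finally have "0 \<le> Re (cinner u u - c * cnj c)"
    using cinner_self_real_nonneg by metis
  then have "(cmod c)\<^sup>2 \<le> (norm u)\<^sup>2"
    by (simp add: cinner_self_norm flip: complex_norm_square)
  then show ?thesis
    unfolding c_def using power2_le_imp_le by fastforce
qed

instantiation prod :: (complex_hilbert, complex_hilbert) complex_hilbert
begin

definition scaleC_prod_def: "c *\<^sub>C p = (c *\<^sub>C fst p, c *\<^sub>C snd p)"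

definition cinner_prod_def: "cinner p q = cinner (fst p) (fst q) + cinner (snd p) (snd q)"

instance
proof
  fix a b :: complex and x y z :: "'a \<times> 'b" and r :: real
  show "a *\<^sub>C (x + y) = a *\<^sub>C x + a *\<^sub>C y"
    by (simp add: scaleC_prod_def scaleC_add_right)
  show "(a + b) *\<^sub>C x = a *\<^sub>C x + b *\<^sub>C x"
    by (simp add: scaleC_prod_def scaleC_add_left)
  show "a *\<^sub>C b *\<^sub>C x = (a * b) *\<^sub>C x"
    by (simp add: scaleC_prod_def scaleC_scaleC)
  show "1 *\<^sub>C x = x"
    by (simp add: scaleC_prod_def scaleC_one)
  show "r *\<^sub>R x = complex_of_real r *\<^sub>C x"
    by (simp add: scaleC_prod_def scaleR_scaleC prod_eq_iff)
  show "cinner x y = cnj (cinner y x)"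
    by (simp add: cinner_prod_def cinner_commute[of "fst x"] cinner_commute[of "snd x"])
  show "cinner (x + y) z = cinner x z + cinner y z"
    by (simp add: cinner_prod_def cinner_add_left)
  show "cinner (a *\<^sub>C x) y = a * cinner x y"
    by (simp add: cinner_prod_def scaleC_prod_def cinner_scaleC_left algebra_simps)
  show "Im (cinner x x) = 0 \<and> 0 \<le> Re (cinner x x)"
    using cinner_self_real_nonneg[of "fst x"] cinner_self_real_nonneg[of "snd x"]
    by (simp add: cinner_prod_def)
  show "cinner x x = 0 \<longleftrightarrow> x = 0"
  proof
    assume "cinner x x = 0"
    then have "cinner (fst x) (fst x) = 0 \<and> cinner (snd x) (snd x) = 0"
      using cinner_self_real_nonneg[of "fst x"] cinner_self_real_nonneg[of "snd x"]
      by (simp add: cinner_prod_def complex_eq_iff)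
    then show "x = 0"
      by (simp add: cinner_self_eq_zero prod_eq_iff)
  qed (simp add: cinner_prod_def)
  show "norm x = sqrt (Re (cinner x x))"
    by (simp add: norm_prod_def cinner_prod_def cinner_self_norm)
qed

end

lemma numrad_sum_eq_numrad: "numrad_sum M = numrad M"
  by (simp add: numrad_sum_def numrad_def norm_sum_def cinner_sum_def norm_prod_def cinner_prod_def)

section \<open>Linear and bounded operators\<close>

definition clinear :: "('a::complex_hilbert \<Rightarrow> 'a) \<Rightarrow> bool" where
  "clinear T \<longleftrightarrow> (\<forall>x y. T (x + y) = T x + T y) \<and> (\<forall>c x. T (c *\<^sub>C x) = c *\<^sub>C T x)"

lemma clinear_add: "clinear T \<Longrightarrow> T (x + y) = T x + T y"
  by (simp add: clinear_def)

lemma clinear_scaleC: "clinear T \<Longrightarrow> T (c *\<^sub>C x) = c *\<^sub>C T x"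
  by (simp add: clinear_def)

lemma clinear_zero: "clinear T \<Longrightarrow> T 0 = 0"
  by (metis clinear_scaleC scaleC_zero_left)

lemma clinear_sum: "clinear T \<Longrightarrow> T (\<Sum>k\<in>K. f k) = (\<Sum>k\<in>K. T (f k))"
  by (induction K rule: infinite_finite_induct) (auto simp: clinear_add clinear_zero)

lemma clinear_funpow: "clinear T \<Longrightarrow> clinear (T ^^ m)"
  by (induction m) (auto simp: clinear_def)

lemma clinear_scaleC_op: "clinear T \<Longrightarrow> clinear (\<lambda>y. a *\<^sub>C T y)"
  by (simp add: clinear_def scaleC_add_right scaleC_scaleC mult.commute)

lemma funpow_scaleC_op:
  assumes "clinear T"
  shows "((\<lambda>y. a *\<^sub>C T y) ^^ m) x = a ^ m *\<^sub>C (T ^^ m) x"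
  by (induction m) (simp_all add: scaleC_one scaleC_scaleC clinear_scaleC[OF assms])

lemma bounded_op_iff: "bounded_op T \<longleftrightarrow> clinear T \<and> (\<exists>K\<ge>0. \<forall>x. norm (T x) \<le> K * norm x)"
proof -
  have "(\<exists>K. \<forall>x. norm (T x) \<le> K * norm x) \<longleftrightarrow> (\<exists>K\<ge>0. \<forall>x. norm (T x) \<le> K * norm x)"
    by (metis max.cobounded1 max.cobounded2 mult_right_mono norm_ge_zero order_trans)
  then show ?thesis
    by (simp add: bounded_op_def clinear_def)
qed

lemma bounded_op_funpow:
  assumes "bounded_op T"
  shows "bounded_op (T ^^ m)"
proof -
  obtain K where "K \<ge> 0" and K: "\<And>x. norm (T x) \<le> K * norm x"
    using assms by (auto simp: bounded_op_iff)
  have bound: "norm ((T ^^ m) x) \<le> K ^ m * norm x" for x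
  proof (induction m)
    case (Suc m)
    have "norm ((T ^^ Suc m) x) \<le> K * norm ((T ^^ m) x)"
      using K by simp
    also have "\<dots> \<le> K * (K ^ m * norm x)"
      using Suc \<open>K \<ge> 0\<close> by (rule mult_left_mono)
    finally show ?case
      by (simp add: mult.assoc)
  qed simp
  moreover have "clinear (T ^^ m)"
    using assms by (simp add: bounded_op_iff clinear_funpow)
  ultimately show ?thesis
    using \<open>K \<ge> 0\<close> unfolding bounded_op_iff by (blast intro: zero_le_power)
qed

lemma bounded_op_opmat:
  assumes "bounded_op P" "bounded_op Q" "bounded_op R" "bounded_op S"
  shows "bounded_op (opmat P Q R S)"
proof -
  obtain KP KQ KR KS where "KP \<ge> 0" "KQ \<ge> 0" "KR \<ge> 0" "KS \<ge> 0"
    and P: "\<And>x. norm (P x) \<le> KP * norm x" and Q: "\<And>x. norm (Q x) \<le> KQ * norm x"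
    and R: "\<And>x. norm (R x) \<le> KR * norm x" and S: "\<And>x. norm (S x) \<le> KS * norm x"
    using assms by (auto simp: bounded_op_iff)
  have "norm (opmat P Q R S p) \<le> (KP + KQ + KR + KS) * norm p" for p
  proof -
    obtain x y where p: "p = (x, y)"
      by fastforce
    have "norm x \<le> norm p" "norm y \<le> norm p"
      unfolding p by (rule norm_fst_le, rule norm_snd_le)
    then have "KP * norm x \<le> KP * norm p" "KQ * norm y \<le> KQ * norm p"
      "KR * norm x \<le> KR * norm p" "KS * norm y \<le> KS * norm p"
      using \<open>KP \<ge> 0\<close> \<open>KQ \<ge> 0\<close> \<open>KR \<ge> 0\<close> \<open>KS \<ge> 0\<close>
      by (simp_all add: mult_left_mono)
    moreover have "norm (opmat P Q R S p) \<le> norm (P x) + norm (Q y) + norm (R x) + norm (S y)"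
      using norm_Pair_le[of "P x + Q y" "R x + S y"] norm_triangle_ineq[of "P x" "Q y"]
        norm_triangle_ineq[of "R x" "S y"]
      by (simp add: opmat_def p)
    ultimately show ?thesis
      using P[of x] Q[of y] R[of x] S[of y] unfolding distrib_right by linarith
  qed
  moreover have "clinear (opmat P Q R S)"
  proof -
    have "clinear P" "clinear Q" "clinear R" "clinear S"
      using assms by (simp_all add: bounded_op_iff)
    then show ?thesis
      unfolding clinear_def opmat_def
      by (simp add: case_prod_beta clinear_add clinear_scaleC scaleC_prod_def scaleC_add_right)
  qed
  moreover have "0 \<le> KP + KQ + KR + KS"
    using \<open>KP \<ge> 0\<close> \<open>KQ \<ge> 0\<close> \<open>KR \<ge> 0\<close> \<open>KS \<ge> 0\<close> by simp
  ultimately show ?thesis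
    unfolding bounded_op_iff by (intro conjI exI[of _ "KP + KQ + KR + KS"]) simp_all
qed

lemma opmat_antidiag_funpow_even:
  "opmat (\<lambda>_. 0) A B (\<lambda>_. 0) ^^ (2 * m) = opmat ((A \<circ> B) ^^ m) (\<lambda>_. 0) (\<lambda>_. 0) ((B \<circ> A) ^^ m)"
proof (induction m)
  case (Suc m)
  have "2 * Suc m = Suc (Suc (2 * m))"
    by simp
  with Suc show ?case
    by (auto simp: opmat_def)
qed (simp add: opmat_def)

section \<open>The numerical radius\<close>

lemma bdd_above_numrad_set:
  assumes "bounded_op T"
  shows "bdd_above (insert 0 {cmod (cinner (T x) x) | x. norm x = 1})"
proof -
  obtain K where K: "\<And>x. norm (T x) \<le> K * norm x"
    using assms by (auto simp: bounded_op_def)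
  have "cmod (cinner (T x) x) \<le> K" if "norm x = 1" for x
    using cmod_cinner_le_norm[OF that, of "T x"] K[of x] that by simp
  then show ?thesis
    by (intro bdd_aboveI[of _ "max K 0"]) fastforce
qed

lemma numrad_nonneg: "bounded_op T \<Longrightarrow> 0 \<le> numrad T"
  unfolding numrad_def by (rule cSup_upper[OF _ bdd_above_numrad_set]) simp_all

lemma cmod_cinner_le_numrad_unit:
  "bounded_op T \<Longrightarrow> norm x = 1 \<Longrightarrow> cmod (cinner (T x) x) \<le> numrad T"
  unfolding numrad_def by (rule cSup_upper[OF _ bdd_above_numrad_set]) auto

lemma cmod_cinner_le_numrad:
  assumes "bounded_op T"
  shows "cmod (cinner (T y) y) \<le> numrad T * (norm y)\<^sup>2"
proof (cases "y = 0")
  case True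
  then show ?thesis
    using assms by (simp add: bounded_op_iff clinear_zero)
next
  case False
  define x where "x = (1 / norm y) *\<^sub>R y"
  have "norm x = 1"
    using False by (simp add: x_def)
  have "cinner (T x) x = complex_of_real ((1 / norm y)\<^sup>2) * cinner (T y) y"
    using assms by (simp add: x_def scaleR_scaleC bounded_op_iff clinear_scaleC cinner_scaleC_left
        cinner_scaleC_right power2_eq_square)
  then have "cmod (cinner (T y) y) / (norm y)\<^sup>2 \<le> numrad T"
    using cmod_cinner_le_numrad_unit[OF assms \<open>norm x = 1\<close>]
    by (simp add: norm_mult norm_divide power2_eq_square)
  then show ?thesis
    using False by (simp add: divide_le_eq)
qed

lemma numrad_le:
  assumes "0 \<le> c" and "\<And>x. norm x = 1 \<Longrightarrow> cmod (cinner (T x) x) \<le> c"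
  shows "numrad T \<le> c"
  unfolding numrad_def by (rule cSup_least) (use assms in auto)

lemma numrad_le_numrad_opmat_diag:
  assumes "bounded_op (opmat P (\<lambda>_. 0) (\<lambda>_. 0) S)"
  shows "max (numrad P) (numrad S) \<le> numrad (opmat P (\<lambda>_. 0) (\<lambda>_. 0) S)"
proof -
  let ?D = "opmat P (\<lambda>_. 0) (\<lambda>_. 0) S"
  have "cmod (cinner (P u) u) \<le> numrad ?D" "cmod (cinner (S u) u) \<le> numrad ?D"
    if "norm u = 1" for u
    using cmod_cinner_le_numrad_unit[OF assms, of "(u, 0)"]
      cmod_cinner_le_numrad_unit[OF assms, of "(0, u)"] that
    by (simp_all add: opmat_def cinner_prod_def norm_prod_def)
  then show ?thesis
    using numrad_nonneg[OF assms] by (simp add: numrad_le)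
qed

section \<open>The power inequality\<close>

lemma sum_powers_root_of_unity_eq_0:
  assumes "0 < m" "m < n"
  shows "(\<Sum>k<n. (exp (2 * of_real pi * \<i> / of_nat n) ^ m) ^ k) = 0"
proof -
  have \<zeta>: "exp (2 * of_real pi * \<i> / of_nat n) ^ m = exp (2 * of_real pi * \<i> * of_nat m / of_nat n)"
    by (simp add: mult.commute flip: exp_of_nat_mult)
  have "exp (2 * of_real pi * \<i> * of_nat m / of_nat n) ^ n = 1"
    using assms by (intro complex_root_unity) simp
  moreover have "exp (2 * of_real pi * \<i> * of_nat m / of_nat n) \<noteq> 1"
    using assms by (subst complex_root_unity_eq_1) (auto dest: dvd_imp_le)
  ultimately show ?thesis
    unfolding \<zeta> by (simp add: sum_gp_strict)
qed

lemma sum_sum_root_of_unity_powers: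
  assumes "0 < n"
  shows "(\<Sum>k<n. \<Sum>m<n. (exp (2 * of_real pi * \<i> / of_nat n) ^ k) ^ m *\<^sub>C v m) = of_nat n *\<^sub>C v 0"
proof -
  let ?\<omega> = "exp (2 * of_real pi * \<i> / of_nat n)"
  have "(\<Sum>k<n. \<Sum>m<n. (?\<omega> ^ k) ^ m *\<^sub>C v m) = (\<Sum>m<n. (\<Sum>k<n. (?\<omega> ^ m) ^ k) *\<^sub>C v m)"
    by (subst sum.swap) (simp add: scaleC_sum_left flip: power_mult add: mult.commute)
  also have "\<dots> = (\<Sum>m<n. if m = 0 then of_nat n *\<^sub>C v 0 else 0)"
    by (rule sum.cong) (auto simp: sum_powers_root_of_unity_eq_0)
  also have "\<dots> = of_nat n *\<^sub>C v 0"
    using assms by simp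
  finally show ?thesis .
qed

lemma funpow_geometric_sum_telescope:
  assumes "clinear S" "\<zeta> ^ n = 1"
  shows "(\<Sum>m<n. \<zeta> ^ m *\<^sub>C (S ^^ m) x) - \<zeta> *\<^sub>C S (\<Sum>m<n. \<zeta> ^ m *\<^sub>C (S ^^ m) x) = x - (S ^^ n) x"
proof -
  define f where "f m = \<zeta> ^ m *\<^sub>C (S ^^ m) x" for m
  have "\<zeta> *\<^sub>C S (\<Sum>m<n. f m) = (\<Sum>m<n. f (Suc m))"
    using assms(1) by (simp add: f_def clinear_sum clinear_scaleC scaleC_sum_right scaleC_scaleC)
  then have "(\<Sum>m<n. f m) - \<zeta> *\<^sub>C S (\<Sum>m<n. f m) = f 0 - f n"
    by (simp add: sum_subtractf flip: sum_lessThan_telescope')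
  also have "\<dots> = x - (S ^^ n) x"
    using assms(2) by (simp add: f_def scaleC_one)
  finally show ?thesis
    by (simp add: f_def)
qed

lemma Re_cinner_funpow_le_norm:
  assumes S: "clinear S"
    and accretive: "\<And>\<zeta> y. cmod \<zeta> = 1 \<Longrightarrow> 0 \<le> Re (cinner (y - \<zeta> *\<^sub>C S y) y)"
  shows "Re (cinner ((S ^^ n) x) x) \<le> (norm x)\<^sup>2"
proof (cases "n = 0")
  case True
  then show ?thesis
    by (simp add: cinner_self_norm)
next
  case False
  define \<omega> where "\<omega> = exp (2 * of_real pi * \<i> / of_nat n)"
  define y where "y k = (\<Sum>m<n. (\<omega> ^ k) ^ m *\<^sub>C (S ^^ m) x)" for k
  have "\<omega> ^ n = 1"
    using complex_root_unity[OF False, of 1] by (simp add: \<omega>_def)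
  then have "(\<omega> ^ k) ^ n = 1" for k
    by (metis power_mult mult.commute power_one)
  then have telescope: "y k - \<omega> ^ k *\<^sub>C S (y k) = x - (S ^^ n) x" for k
    unfolding y_def by (rule funpow_geometric_sum_telescope[OF S])
  have sum_y: "(\<Sum>k<n. y k) = of_nat n *\<^sub>C x"
    using sum_sum_root_of_unity_powers[of n "\<lambda>m. (S ^^ m) x"] False
    by (simp add: y_def \<omega>_def scaleC_one)
  have "cmod (\<omega> ^ k) = 1" for k
    by (simp add: \<omega>_def norm_power norm_exp_eq_Re)
  then have "0 \<le> Re (\<Sum>k<n. cinner (y k - \<omega> ^ k *\<^sub>C S (y k)) (y k))"
    unfolding Re_sum by (intro sum_nonneg accretive)
  also have "(\<Sum>k<n. cinner (y k - \<omega> ^ k *\<^sub>C S (y k)) (y k)) = of_nat n * cinner (x - (S ^^ n) x) x"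
    by (simp add: telescope sum_y flip: cinner_sum_right) (simp add: cinner_scaleC_right)
  finally have "0 \<le> Re (cinner (x - (S ^^ n) x) x)"
    using False by (simp add: zero_le_mult_iff)
  then show ?thesis
    by (simp add: cinner_diff_left cinner_self_norm)
qed

lemma cmod_cinner_funpow_le:
  assumes T: "clinear T" and "0 < r" and bound: "\<And>y. cmod (cinner (T y) y) \<le> r * (norm y)\<^sup>2"
  shows "cmod (cinner ((T ^^ n) x) x) \<le> r ^ n * (norm x)\<^sup>2"
proof (cases "n = 0")
  case True
  then show ?thesis
    by (simp add: cinner_self_norm norm_power)
next
  case False
  define c where "c = cinner ((T ^^ n) x) x"
  \<comment> \<open>scaled so that w(a T) \<le> 1, and rotated so that a^n c = \<langle>(a T)^n x, x\<rangle> is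
    real and nonnegative\<close>
  define a where "a = cis (- Arg c / n) / complex_of_real r"
  have "0 \<le> Re (cinner (y - \<zeta> *\<^sub>C a *\<^sub>C T y) y)" if "cmod \<zeta> = 1" for \<zeta> y
  proof -
    have "Re (\<zeta> * a * cinner (T y) y) \<le> cmod (\<zeta> * a * cinner (T y) y)"
      by (rule complex_Re_le_cmod)
    also have "\<dots> = cmod (cinner (T y) y) / r"
      using that \<open>0 < r\<close> by (simp add: a_def norm_mult norm_divide)
    also have "\<dots> \<le> (norm y)\<^sup>2"
      using bound[of y] \<open>0 < r\<close> by (simp add: divide_le_eq mult.commute)
    finally show ?thesis
      by (simp add: cinner_diff_left cinner_scaleC_left cinner_self_norm mult.assoc)
  qed
  then have "Re (cinner (((\<lambda>y. a *\<^sub>C T y) ^^ n) x) x) \<le> (norm x)\<^sup>2"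
    by (intro Re_cinner_funpow_le_norm clinear_scaleC_op[OF T])
  also have "cinner (((\<lambda>y. a *\<^sub>C T y) ^^ n) x) x = a ^ n * c"
    by (simp add: funpow_scaleC_op[OF T] cinner_scaleC_left c_def)
  also have "a ^ n * c = complex_of_real (cmod c / r ^ n)"
  proof -
    have "a ^ n = cis (- Arg c) / complex_of_real (r ^ n)"
      using False by (simp add: a_def power_divide Complex.DeMoivre)
    moreover have "cis (- Arg c) * c = cis (- Arg c) * rcis (cmod c) (Arg c)"
      by (simp add: rcis_cmod_Arg)
    ultimately show ?thesis
      by (simp add: rcis_def cis_mult mult.left_commute)
  qed
  finally show ?thesis
    using \<open>0 < r\<close> by (simp add: c_def divide_le_eq mult.commute)
qed

theorem numrad_funpow_le:
  assumes "bounded_op T"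
  shows "numrad (T ^^ n) \<le> numrad T ^ n"
proof (rule numrad_le)
  show "0 \<le> numrad T ^ n"
    using numrad_nonneg[OF assms] by simp
next
  fix x :: 'a
  assume "norm x = 1"
  have above: "cmod (cinner ((T ^^ n) x) x) \<le> r ^ n" if "numrad T < r" for r
  proof -
    have "cmod (cinner (T y) y) \<le> r * (norm y)\<^sup>2" for y
      using cmod_cinner_le_numrad[OF assms, of y] that
      by (meson order_trans less_imp_le mult_right_mono zero_le_power2)
    then show ?thesis
      using cmod_cinner_funpow_le[of T r n x] assms numrad_nonneg[OF assms] that \<open>norm x = 1\<close>
      by (simp add: bounded_op_iff)
  qed
  have "\<forall>\<^sub>F r in at_right (numrad T). cmod (cinner ((T ^^ n) x) x) \<le> r ^ n"
    using eventually_at_right_less by (rule eventually_mono) (rule above)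
  moreover have "((\<lambda>r. r ^ n) \<longlongrightarrow> numrad T ^ n) (at_right (numrad T))"
    by (intro tendsto_intros)
  ultimately show "cmod (cinner ((T ^^ n) x) x) \<le> numrad T ^ n"
    by (intro tendsto_lowerbound) (use trivial_limit_at_right_real in \<open>simp_all add: trivial_limit_def\<close>)
qed

theorem theorem4p7:
  fixes A B :: "'a::complex_hilbert \<Rightarrow> 'a" and n :: nat
  assumes "bounded_op A" and "bounded_op B" and "n \<ge> 1"
  shows "numrad_sum (opmat (\<lambda>_. 0) A B (\<lambda>_. 0))
           \<ge> root (2 * n) (max (numrad ((A \<circ> B) ^^ n)) (numrad ((B \<circ> A) ^^ n)))"
proof -
  define T where "T = opmat (\<lambda>_. 0) A B (\<lambda>_. 0)"
  have "bounded_op (\<lambda>_. 0 :: 'a)"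
    by (simp add: bounded_op_def exI[of _ 0])
  then have T: "bounded_op T"
    using assms by (simp add: T_def bounded_op_opmat)
  have "max (numrad ((A \<circ> B) ^^ n)) (numrad ((B \<circ> A) ^^ n)) \<le> numrad (T ^^ (2 * n))"
    using numrad_le_numrad_opmat_diag bounded_op_funpow[OF T, of "2 * n"]
    by (simp add: T_def opmat_antidiag_funpow_even)
  also have "\<dots> \<le> numrad T ^ (2 * n)"
    using T by (rule numrad_funpow_le)
  finally have "root (2 * n) (max (numrad ((A \<circ> B) ^^ n)) (numrad ((B \<circ> A) ^^ n)))
      \<le> root (2 * n) (numrad T ^ (2 * n))"
    using assms(3) by (intro real_root_le_mono) auto
  also have "\<dots> = numrad_sum T"
    using assms(3) numrad_nonneg[OF T] by (simp add: numrad_sum_eq_numrad real_root_power_cancel)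
  finally show ?thesis
    by (simp add: T_def)
qed

end
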